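(* Let $X,Z\in\mathbb{R}^{n\times r}$ with $XX^{T}\ne ZZ^{T}$. Then $$\delta(X,Z)\ge\max_{t\ge0}\frac{\cos\theta(t)-t}{1+t},$$ where for $t\ge0$, $$\cos\theta(t):=\max_{y,\,W_{i,j}}\left\{\frac{\mathbf{e}^{T}[\mathbf{J}y-w]}{\|\mathbf{e}\|\,\|\mathbf{J}y-w\|}\;:\;\frac{\langle\mathbf{J}^{T}\mathbf{J},W\rangle}{\|\mathbf{e}\|\,\|\mathbf{J}y-w\|}=2t,\;W\succeq0\right\},$$ the maximization being over $y\in\mathbb{R}^{nr}$ and $W_{i,j}\in\mathbb{R}^{n\times n}$ for $i,j\in\{1,\dots,r\}$, with $W=[W_{i,j}]_{i,j=1}^{r}\in\mathbb{R}^{nr\times nr}$ and $w=\sum_{i=1}^{r}\mathrm{vec}(W_{i,i})$.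
   Context: $\mathbf{e}=\mathrm{vec}(XX^{T}-ZZ^{T})\in\mathbb{R}^{n^{2}}$ (column-stacking vectorization) and $\mathbf{J}\in\mathbb{R}^{n^{2}\times nr}$ satisfies $\mathbf{J}\,\mathrm{vec}(Y)=\mathrm{vec}(XY^{T}+YX^{T})$ for all $Y\in\mathbb{R}^{n\times r}$; $\langle A,B\rangle=\mathrm{tr}(A^{T}B)$. A linear map $\mathcal{A}:\mathbb{R}^{n\times n}\to\mathbb{R}^{m}$ satisfies $(\delta,p)$-RIP if $0\le\delta<1$ and there is $\nu>0$ with $(1-\delta)\|E\|_{F}^{2}\le\frac{1}{\nu}\|\mathcal{A}(E)\|^{2}\le(1+\delta)\|E\|_{F}^{2}$ for all $E$ of rank at most $p$. With $r^{\star}=\mathrm{rank}(Z)$, $\delta(X,Z)$ is the infimum of all $\delta$ for which there exist $m\ge1$ and linear $\mathcal{A}:\mathbb{R}^{n\times n}\to\mathbb{R}^{m}$ satisfying $(\delta,r+r^{\star})$-RIP with $\nabla f_{\mathcal{A}}(X)=0$ and $\nabla^{2}f_{\mathcal{A}}(X)\succeq0$, where $f_{\mathcal{A}}(U)=\|\mathcal{A}(UU^{T}-ZZ^{T})\|^{2}$ on $\mathbb{R}^{n\times r}$. *)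

theory Defs
  imports "HOL-Analysis.Analysis"
begin

text \<open>Matrices in R^(a x c) are real^'c^'a (rows indexed by 'a). The vectorization
  vec(M) is indexed by pairs (row, column); this is column-stacking up to the fixed
  identification of the index set of R^(ac) with 'a x 'c.\<close>

definition vecm :: "real^'c^'a \<Rightarrow> real^('a \<times> 'c)" where
  "vecm M = (\<chi> p. M $ fst p $ snd p)"

definition unvecm :: "real^('a \<times> 'c) \<Rightarrow> real^'c^'a" where
  "unvecm v = (\<chi> i j. v $ (i, j))"

definition err_vec :: "real^'r^'n \<Rightarrow> real^'r^'n \<Rightarrow> real^('n \<times> 'n)" where
  "err_vec X Z = vecm (X ** transpose X - Z ** transpose Z)"

definition Jmat :: "real^'r^'n \<Rightarrow> real^('n::finite \<times> 'r::finite)^('n \<times> 'n)" where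
  "Jmat X = matrix (\<lambda>v. vecm (X ** transpose (unvecm v) + unvecm v ** transpose X))"

definition psd :: "real^'k^'k \<Rightarrow> bool" where
  "psd M \<longleftrightarrow> transpose M = M \<and> (\<forall>x. 0 \<le> x \<bullet> (M *v x))"

definition frob_inner :: "real^'k^'k \<Rightarrow> real^'k^'k \<Rightarrow> real" where
  "frob_inner A B = trace (transpose A ** B)"

text \<open>W in R^(nr x nr) indexed by ('n x 'r) pairs, consistent with vec; the block
  W_{i,j} in R^(n x n) has entries (W_{i,j})_{a,b} = W $ (a,i) $ (b,j).
  w = sum_i vec(W_{i,i}).\<close>
definition wvec :: "real^('n::finite \<times> 'r::finite)^('n::finite \<times> 'r::finite) \<Rightarrow> real^('n \<times> 'n)" where
  "wvec W = (\<chi> p. \<Sum>i\<in>UNIV. W $ (fst p, i) $ (snd p, i))"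

definition feasible :: "real^'r^'n \<Rightarrow> real^'r^'n \<Rightarrow> real \<Rightarrow> real^('n::finite \<times> 'r::finite)
    \<Rightarrow> real^('n::finite \<times> 'r::finite)^('n::finite \<times> 'r::finite) \<Rightarrow> bool" where
  "feasible X Z t y W \<longleftrightarrow>
     psd W \<and> Jmat X *v y - wvec W \<noteq> 0 \<and>
     frob_inner (transpose (Jmat X) ** Jmat X) W
       / (norm (err_vec X Z) * norm (Jmat X *v y - wvec W)) = 2 * t"

definition objective :: "real^'r^'n \<Rightarrow> real^'r^'n \<Rightarrow> real^('n::finite \<times> 'r::finite)
    \<Rightarrow> real^('n::finite \<times> 'r::finite)^('n::finite \<times> 'r::finite) \<Rightarrow> real" where
  "objective X Z y W =
     (err_vec X Z \<bullet> (Jmat X *v y - wvec W))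
       / (norm (err_vec X Z) * norm (Jmat X *v y - wvec W))"

definition cos_theta :: "real^'r^'n \<Rightarrow> real^'r^'n \<Rightarrow> real \<Rightarrow> real" where
  "cos_theta X Z t = Sup {objective X Z y W | y W. feasible X Z t y W}"

text \<open>A linear map A : R^(n x n) -> R^m is given by its m coordinate functionals
  A 0, ..., A (m-1); its Euclidean norm squared is the sum of squares.\<close>
definition sqnormA :: "nat \<Rightarrow> (nat \<Rightarrow> real^'n^'n \<Rightarrow> real) \<Rightarrow> real^'n^'n \<Rightarrow> real" where
  "sqnormA m A E = (\<Sum>i<m. (A i E)\<^sup>2)"

definition is_RIP :: "nat \<Rightarrow> (nat \<Rightarrow> real^'n^'n \<Rightarrow> real) \<Rightarrow> real \<Rightarrow> nat \<Rightarrow> bool" where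
  "is_RIP m A \<delta> p \<longleftrightarrow> 0 \<le> \<delta> \<and> \<delta> < 1 \<and>
     (\<exists>\<nu>>0. \<forall>E::real^'n^'n. rank E \<le> p \<longrightarrow>
        (1 - \<delta>) * (norm E)\<^sup>2 \<le> (1 / \<nu>) * sqnormA m A E \<and>
        (1 / \<nu>) * sqnormA m A E \<le> (1 + \<delta>) * (norm E)\<^sup>2)"

definition fA :: "nat \<Rightarrow> (nat \<Rightarrow> real^'n^'n \<Rightarrow> real) \<Rightarrow> real^'r^'n \<Rightarrow> real^'r^'n \<Rightarrow> real" where
  "fA m A Z U = sqnormA m A (U ** transpose U - Z ** transpose Z)"

definition grad_zero :: "(real^'r^'n \<Rightarrow> real) \<Rightarrow> real^'r^'n \<Rightarrow> bool" where
  "grad_zero f X \<longleftrightarrow> (f has_derivative (\<lambda>_. 0)) (at X)"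

definition hess_psd :: "(real^'r^'n \<Rightarrow> real) \<Rightarrow> real^'r^'n \<Rightarrow> bool" where
  "hess_psd f X \<longleftrightarrow> (\<exists>D2. ((\<lambda>U. Blinfun (frechet_derivative f (at U))) has_derivative D2) (at X)
      \<and> (\<forall>Y. 0 \<le> blinfun_apply (D2 Y) Y))"

definition delta_XZ :: "real^'r^'n \<Rightarrow> real^'r^'n \<Rightarrow> ereal" where
  "delta_XZ X Z = Inf (ereal ` {\<delta>. \<exists>m\<ge>1. \<exists>A :: nat \<Rightarrow> real^'n^'n \<Rightarrow> real.
       (\<forall>i<m. linear (A i)) \<and> is_RIP m A \<delta> (CARD('r) + rank Z) \<and>
       grad_zero (fA m A Z) X \<and> hess_psd (fA m A Z) X})"

end

theory Submission
  imports Defs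
begin

text \<open>Write E = X X^T - Z Z^T and <E, F>_A = <A(E), A(F)>. At a second-order critical point X
  of f_A, stationarity gives <E, X Y^T + Y X^T>_A = 0 for every Y, and the positive semidefinite
  Hessian gives ||A(X Y^T + Y X^T)||^2 + 2 <E, Y Y^T>_A >= 0. Factor W = sum_k v_k v_k^T, put
  Y_k = unvec(v_k) and U = X Y^T + Y X^T - sum_k Y_k Y_k^T, so that J y - w = vec(U). The two
  conditions and the upper RIP bound give
  <E, U>_A <= nu (1 + delta)/2 sum_k ||X Y_k^T + Y_k X^T||^2 = nu (1 + delta) t ||E|| ||U||,
  while the lower RIP bound, by polarization, gives <E, U>_A >= nu (<E, U> - delta ||E|| ||U||).
  Hence cos theta(t) <= delta (1 + t) + t. Since the RIP only controls matrices of rank at most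
  r + rank Z, all matrices are first compressed by the orthogonal projector onto the column span
  of X and Z, which fixes E and does not increase norms.\<close>

lemma bounded_bilinear_matrix_mult:
  "bounded_bilinear ((**) :: real^'n^'m \<Rightarrow> real^'p^'n \<Rightarrow> real^'p^'m)"
proof -
  have "bilinear ((**) :: real^'n^'m \<Rightarrow> real^'p^'n \<Rightarrow> real^'p^'m)"
    unfolding bilinear_def
    by (auto intro!: linearI simp: vec_eq_iff matrix_matrix_mult_def sum.distrib
        sum_distrib_left algebra_simps)
  then show ?thesis
    using bilinear_conv_bounded_bilinear by blast
qed

lemma bounded_linear_transpose: "bounded_linear (transpose :: real^'n^'m \<Rightarrow> real^'m^'n)"
  by (auto intro!: linear_conv_bounded_linear[THEN iffD1] linearI
      simp: vec_eq_iff transpose_def)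

lemma bounded_bilinear_mult_transpose:
  "bounded_bilinear (\<lambda>(U::real^'r^'n) (V::real^'r^'m). U ** transpose V)"
  using bounded_bilinear.comp[OF bounded_bilinear_matrix_mult bounded_linear_ident
      bounded_linear_transpose] by simp

interpretation matrix_mult: bounded_bilinear "(**) :: real^'n^'m \<Rightarrow> real^'p^'n \<Rightarrow> real^'p^'m"
  by (rule bounded_bilinear_matrix_mult)

definition symm_prod :: "real^'r^'n \<Rightarrow> real^'r^'n \<Rightarrow> real^'n^'n" where
  "symm_prod X Y = X ** transpose Y + Y ** transpose X"

lemma inner_eq_trace: "(M::real^'c^'a) \<bullet> N = trace (transpose M ** N)"
proof -
  have "M \<bullet> N = (\<Sum>i\<in>UNIV. \<Sum>j\<in>UNIV. M$i$j * N$i$j)" by (simp add: inner_vec_def)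
  also have "\<dots> = (\<Sum>j\<in>UNIV. \<Sum>i\<in>UNIV. M$i$j * N$i$j)" by (rule sum.swap)
  finally show ?thesis by (simp add: trace_def matrix_matrix_mult_def transpose_def)
qed

lemma inner_compress:
  fixes P F G :: "real^'n^'n"
  assumes "transpose P = P"
  shows "(P ** F ** P) \<bullet> G = F \<bullet> (P ** G ** P)"
proof -
  have "(P ** F ** P) \<bullet> G = trace (P ** (transpose F ** (P ** G)))"
    by (simp add: inner_eq_trace matrix_transpose_mul assms matrix_mul_assoc)
  also have "\<dots> = trace ((transpose F ** (P ** G)) ** P)" by (rule trace_mul_sym)
  finally show ?thesis by (simp add: inner_eq_trace matrix_mul_assoc)
qed

lemma norm_compress_le:
  fixes P F :: "real^'n^'n"
  assumes "transpose P = P" "P ** P = P"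
  shows "norm (P ** F ** P) \<le> norm F"
proof -
  have "P ** (P ** F ** P) ** P = P ** F ** P"
    by (metis assms(2) matrix_mul_assoc)
  then have "(norm (P ** F ** P))\<^sup>2 = F \<bullet> (P ** F ** P)"
    by (metis inner_compress[OF assms(1)] power2_norm_eq_inner)
  also have "\<dots> \<le> norm F * norm (P ** F ** P)" by (rule norm_cauchy_schwarz)
  finally show ?thesis
    by (cases "P ** F ** P = 0") (simp_all add: power2_eq_square mult_le_cancel_right)
qed

lemma symm_prod_compress:
  fixes P :: "real^'n^'n" and X Y :: "real^'r^'n"
  assumes "transpose P = P" "P ** X = X"
  shows "symm_prod X (P ** Y) = P ** symm_prod X Y ** P"
proof -
  have XP: "transpose X ** P = transpose X"
    by (metis assms matrix_transpose_mul)
  have "X ** (transpose Y ** P) = P ** X ** transpose Y ** P"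
    by (simp add: assms(2) matrix_mul_assoc)
  moreover have "P ** Y ** transpose X = P ** Y ** transpose X ** P"
    by (simp add: XP flip: matrix_mul_assoc)
  ultimately show ?thesis
    by (simp add: symm_prod_def matrix_transpose_mul assms(1) matrix_mult.add_left
        matrix_mult.add_right matrix_mul_assoc)
qed

lemma outer_compress:
  fixes P :: "real^'n^'n" and Y :: "real^'r^'n"
  assumes "transpose P = P"
  shows "(P ** Y) ** transpose (P ** Y) = P ** (Y ** transpose Y) ** P"
  by (simp add: matrix_transpose_mul assms matrix_mul_assoc)

lemma orthogonal_projector_exists:
  fixes S :: "(real^'n) set"
  assumes "subspace S"
  shows "\<exists>P::real^'n^'n. transpose P = P \<and> P ** P = P \<and> (\<forall>x\<in>S. P *v x = x) \<and> rank P \<le> dim S"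
proof -
  obtain B where B: "B \<subseteq> S" "pairwise orthogonal B" "\<And>x. x \<in> B \<Longrightarrow> norm x = 1"
      "independent B" "span B = S"
    using orthonormal_basis_subspace[OF assms] by metis
  have finB: "finite B" using B(4) finiteI_independent by blast
  define P :: "real^'n^'n" where "P = (\<chi> i j. \<Sum>b\<in>B. b$i * b$j)"
  have Pv: "P *v x = (\<Sum>b\<in>B. (b \<bullet> x) *\<^sub>R b)" for x
  proof -
    have "(P *v x) $ i = (\<Sum>b\<in>B. (b \<bullet> x) * b $ i)" for i
    proof -
      have "(P *v x) $ i = (\<Sum>j\<in>UNIV. \<Sum>b\<in>B. b$i * b$j * x$j)"
        by (simp add: P_def matrix_vector_mult_def sum_distrib_right)
      also have "\<dots> = (\<Sum>b\<in>B. \<Sum>j\<in>UNIV. b$i * b$j * x$j)" by (rule sum.swap)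
      finally show ?thesis
        by (simp add: inner_vec_def sum_distrib_left sum_distrib_right mult_ac)
    qed
    then show ?thesis by (simp add: vec_eq_iff sum_component)
  qed
  have Pb: "P *v b = b" if "b \<in> B" for b
  proof -
    have "(c \<bullet> b) *\<^sub>R c = (if c = b then b else 0)" if "c \<in> B" for c
      using B(2,3) \<open>b \<in> B\<close> that
      by (auto simp: pairwise_def orthogonal_def dot_square_norm)
    then show ?thesis
      using \<open>b \<in> B\<close> finB by (simp add: Pv sum.delta' cong: sum.cong)
  qed
  have PS: "\<forall>x\<in>S. P *v x = x"
    unfolding B(5)[symmetric]
  proof
    fix x assume "x \<in> span B"
    then show "P *v x = x"
      by (induction rule: span_induct_alt)
        (simp_all add: Pb matrix_vector_right_distrib matrix_vector_mult_scaleR)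
  qed
  have PinS: "P *v x \<in> S" for x
    unfolding Pv B(5)[symmetric] by (intro span_sum span_scale span_base) auto
  have "transpose P = P" by (simp add: P_def transpose_def vec_eq_iff mult.commute)
  moreover have "P ** P = P"
    unfolding matrix_eq by (simp add: matrix_vector_mul_assoc[symmetric] PS PinS)
  moreover have "rank P \<le> dim S"
    unfolding rank_dim_range using PinS by (intro dim_subset) auto
  ultimately show ?thesis using PS by blast
qed

lemma column_projector_exists:
  fixes X :: "real^'r^'n" and Z :: "real^'s^'n"
  shows "\<exists>P::real^'n^'n. transpose P = P \<and> P ** P = P \<and> P ** X = X \<and> P ** Z = Z
           \<and> rank P \<le> CARD('r) + rank Z"
proof -
  obtain BZ where BZ: "BZ \<subseteq> columns Z" "independent BZ" "columns Z \<subseteq> span BZ"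
      "card BZ = dim (columns Z)"
    using basis_exists by blast
  define S where "S = span (columns X \<union> BZ)"
  have finBZ: "finite BZ" using BZ(2) finiteI_independent by blast
  have cX: "columns X = range (\<lambda>i. column i X)" by (auto simp: columns_def)
  have "dim S \<le> card (columns X \<union> BZ)"
    unfolding S_def by (rule dim_le_card) (auto simp: cX finBZ)
  also have "\<dots> \<le> card (columns X) + card BZ" by (rule card_Un_le)
  also have "card (columns X) \<le> CARD('r)" unfolding cX by (rule card_image_le) simp
  finally have dimS: "dim S \<le> CARD('r) + rank Z"
    using BZ(4) column_rank_def[of Z] by simp
  obtain P :: "real^'n^'n" where P: "transpose P = P" "P ** P = P" "\<forall>x\<in>S. P *v x = x"
      "rank P \<le> dim S"
    using orthogonal_projector_exists[of S] unfolding S_def by auto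
  have "span (columns X) \<subseteq> S" "span (columns Z) \<subseteq> S"
    unfolding S_def using BZ(3) span_mono span_span by (blast, metis Un_upper2 subset_trans)
  then have "X *v x \<in> S" "Z *v z \<in> S" for x z
    using matrix_vector_mult_in_columnspace by blast+
  then have "P ** X = X" "P ** Z = Z"
    unfolding matrix_eq by (simp_all add: matrix_vector_mul_assoc[symmetric] P(3))
  then show ?thesis using P(1,2,4) dimS by auto
qed

lemma quadratic_nonneg_imp_discriminant_le:
  fixes a b c :: real
  assumes nonneg: "\<And>s. 0 \<le> a * s\<^sup>2 + 2 * b * s + c"
  shows "b\<^sup>2 \<le> a * c"
proof -
  consider "a < 0" | "a = 0" | "a > 0" by linarith
  then show ?thesis
  proof cases
    case 1
    define s where "s = sqrt ((\<bar>c\<bar> + 1) / - a)"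
    have "0 \<le> (\<bar>c\<bar> + 1) / - a" using 1 by (intro divide_nonneg_pos) auto
    then have "s\<^sup>2 = (\<bar>c\<bar> + 1) / - a" by (simp add: s_def)
    then have "a * s\<^sup>2 = - (\<bar>c\<bar> + 1)" using 1 by (simp add: field_simps)
    moreover have "0 \<le> 2 * (a * s\<^sup>2) + 2 * c"
      using nonneg[of s] nonneg[of "- s"] by simp
    ultimately show ?thesis using abs_ge_self[of c] by linarith
  next
    case 2
    have "b = 0"
    proof (rule ccontr)
      assume "b \<noteq> 0"
      then have "2 * b * (- (c + 1) / (2 * b)) + c = -1" by (simp add: field_simps)
      then show False using nonneg[of "- (c + 1) / (2 * b)"] 2 by simp
    qed
    then show ?thesis using 2 by simp
  next
    case 3
    have "a * (- b / a)\<^sup>2 + 2 * b * (- b / a) + c = (a * c - b\<^sup>2) / a"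
      using 3 by (simp add: field_simps power2_eq_square)
    then show ?thesis using nonneg[of "- b / a"] 3 by (simp add: zero_le_divide_iff)
  qed
qed

definition outer :: "real^'k \<Rightarrow> real^'k^'k" where
  "outer v = (\<chi> i j. v$i * v$j)"

lemma psd_symmetric: "psd W \<Longrightarrow> W$j$i = W$i$j"
  unfolding psd_def by (metis transpose_def vec_lambda_beta)

lemma inner_axis_matrix_vector: "axis i (1::real) \<bullet> (W *v z) = (W *v z) $ i"
  using inner_axis'[of i "1::real"] by simp

lemma quadratic_form_axis: "axis x (1::real) \<bullet> (W *v axis x 1) = W$x$x"
  by (simp add: inner_axis' matrix_vector_mult_basis column_def)

lemma psd_diagonal_nonneg: "psd W \<Longrightarrow> 0 \<le> W$x$x"
  unfolding psd_def by (metis quadratic_form_axis)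

lemma psd_cauchy_schwarz:
  assumes "psd W"
  shows "((W *v z) $ x)\<^sup>2 \<le> W$x$x * (z \<bullet> (W *v z))"
proof (rule quadratic_nonneg_imp_discriminant_le)
  fix s
  define e where "e = axis x (1::real)"
  have "z \<bullet> (W *v e) = e \<bullet> (W *v z)"
    by (metis assms dot_lmul_matrix inner_commute psd_def transpose_matrix_vector)
  moreover have "e \<bullet> (W *v z) = (W *v z) $ x"
    by (simp add: e_def inner_axis_matrix_vector)
  moreover have "e \<bullet> (W *v e) = W$x$x"
    unfolding e_def by (rule quadratic_form_axis)
  moreover have "0 \<le> (z + s *\<^sub>R e) \<bullet> (W *v (z + s *\<^sub>R e))"
    using assms unfolding psd_def by blast
  ultimately show "0 \<le> W$x$x * s\<^sup>2 + 2 * (W *v z) $ x * s + z \<bullet> (W *v z)"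
    by (simp add: matrix_vector_right_distrib matrix_vector_mult_scaleR inner_add_left
        inner_add_right power2_eq_square algebra_simps)
qed

lemma psd_zero_diagonal_imp_zero_row:
  assumes "psd W" "W$x$x = 0"
  shows "W$x = 0"
proof -
  have "(W *v axis j 1) $ x = 0" for j
    using psd_cauchy_schwarz[OF assms(1), of "axis j 1" x] assms(2) by simp
  then show ?thesis
    by (simp add: vec_eq_iff matrix_vector_mult_basis column_def)
qed

lemma outer_mult_vector: "outer c *v z = (c \<bullet> z) *\<^sub>R c"
  by (simp add: vec_eq_iff outer_def matrix_vector_mult_def inner_vec_def sum_distrib_left
      mult_ac)

lemma psd_minus_outer_row:
  assumes "psd W" "0 < W$x$x"
  defines "c \<equiv> (1 / sqrt (W$x$x)) *\<^sub>R W$x"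
  shows "psd (W - outer c)" and "(W - outer c)$x = 0"
proof -
  define d where "d = W$x$x"
  have sd: "sqrt d * sqrt d = d" "sqrt d > 0" using assms(2) by (simp_all add: d_def)
  have "0 \<le> z \<bullet> ((W - outer c) *v z)" for z
  proof -
    have "(W *v z) $ x = sqrt d * (c \<bullet> z)"
      using sd by (simp add: c_def d_def matrix_vector_mul_component)
    then have "d * (z \<bullet> ((W - outer c) *v z)) = d * (z \<bullet> (W *v z)) - ((W *v z) $ x)\<^sup>2"
      using sd by (simp add: matrix_vector_mult_diff_rdistrib outer_mult_vector inner_diff_right
          inner_commute[of z c] power2_eq_square algebra_simps)
    then have "0 \<le> d * (z \<bullet> ((W - outer c) *v z))"
      using psd_cauchy_schwarz[OF assms(1), of z x] by (simp add: d_def)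
    then show ?thesis
      using assms(2) by (simp add: d_def zero_le_mult_iff)
  qed
  moreover have "transpose (W - outer c) = W - outer c"
    by (simp add: outer_def transpose_def vec_eq_iff psd_symmetric[OF assms(1)] mult.commute)
  ultimately show "psd (W - outer c)" unfolding psd_def by blast
  show "(W - outer c)$x = 0"
    using sd by (simp add: vec_eq_iff outer_def c_def d_def)
qed

lemma psd_eq_sum_outer_on:
  fixes W :: "real^'k^'k"
  assumes "finite S" "psd W" "\<forall>i. i \<notin> S \<longrightarrow> W$i = 0"
  shows "\<exists>V :: 'k \<Rightarrow> real^'k. W = (\<Sum>k\<in>S. outer (V k))"
  using assms
proof (induction S arbitrary: W rule: finite_induct)
  case empty
  then show ?case by (simp add: vec_eq_iff)
next
  case (insert x F W)
  have extend: "(\<Sum>k\<in>insert x F. outer ((V(x := v)) k)) = outer v + (\<Sum>k\<in>F. outer (V k))"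
    for V v
  proof -
    have "(\<Sum>k\<in>F. outer ((V(x := v)) k)) = (\<Sum>k\<in>F. outer (V k))"
      using insert.hyps(2) by (intro sum.cong) auto
    then show ?thesis using insert.hyps by simp
  qed
  show ?case
  proof (cases "W$x$x = 0")
    case True
    then have "W$x = 0" using psd_zero_diagonal_imp_zero_row insert.prems(1) by blast
    then have "\<forall>i. i \<notin> F \<longrightarrow> W$i = 0" using insert.prems(2) by auto
    then obtain V where "W = (\<Sum>k\<in>F. outer (V k))"
      using insert.IH insert.prems(1) by blast
    moreover have "outer 0 = 0" by (simp add: outer_def vec_eq_iff)
    ultimately have "W = (\<Sum>k\<in>insert x F. outer ((V(x := 0)) k))"
      unfolding extend by simp
    then show ?thesis by blast
  next
    case False
    then have pos: "0 < W$x$x"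
      using psd_diagonal_nonneg[OF insert.prems(1), of x] by linarith
    define c where "c = (1 / sqrt (W$x$x)) *\<^sub>R W$x"
    have "(W - outer c)$i = 0" if "i \<notin> F" for i
    proof (cases "i = x")
      case True
      then show ?thesis using psd_minus_outer_row(2)[OF insert.prems(1) pos] by (simp add: c_def)
    next
      case False
      then have "W$i = 0" using that insert.prems(2) by simp
      moreover have "c$i = 0"
        using \<open>W$i = 0\<close> psd_symmetric[OF insert.prems(1), of x i] by (simp add: c_def)
      ultimately show ?thesis by (simp add: outer_def vec_eq_iff)
    qed
    then obtain V where "W - outer c = (\<Sum>k\<in>F. outer (V k))"
      using insert.IH psd_minus_outer_row(1)[OF insert.prems(1) pos] unfolding c_def by blast
    then have "W = (\<Sum>k\<in>insert x F. outer ((V(x := c)) k))"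
      unfolding extend by (simp add: algebra_simps)
    then show ?thesis by blast
  qed
qed

lemma psd_eq_sum_outer:
  fixes W :: "real^'k^'k"
  assumes "psd W"
  shows "\<exists>V :: 'k \<Rightarrow> real^'k. W = (\<Sum>k\<in>UNIV. outer (V k))"
  using psd_eq_sum_outer_on[of UNIV W] assms by simp

definition innerA :: "nat \<Rightarrow> (nat \<Rightarrow> real^'n^'n \<Rightarrow> real) \<Rightarrow> real^'n^'n \<Rightarrow> real^'n^'n \<Rightarrow> real" where
  "innerA m A E F = (\<Sum>i<m. A i E * A i F)"

lemma sqnormA_eq_innerA: "sqnormA m A E = innerA m A E E"
  by (simp add: sqnormA_def innerA_def power2_eq_square)

lemma innerA_commute: "innerA m A E F = innerA m A F E"
  by (simp add: innerA_def mult.commute)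

lemma bounded_bilinear_innerA:
  assumes "\<forall>i<m. linear (A i)"
  shows "bounded_bilinear (innerA m A)"
proof -
  have "bilinear (innerA m A)"
    unfolding bilinear_def innerA_def
    using assms by (auto intro!: linearI simp: linear_add linear_scale sum.distrib
        sum_distrib_left algebra_simps)
  then show ?thesis
    using bilinear_conv_bounded_bilinear by blast
qed

lemma has_derivative_gram_minus:
  "((\<lambda>U::real^'r^'n. U ** transpose U - C) has_derivative symm_prod U) (at U)"
  unfolding symm_prod_def
  by (rule bounded_bilinear.FDERIV[OF bounded_bilinear_mult_transpose, THEN has_derivative_diff,
        OF has_derivative_ident has_derivative_ident has_derivative_const, simplified])

lemma has_derivative_symm_prod:
  fixes Y :: "real^'r^'n"
  shows "((\<lambda>U. symm_prod U Y) has_derivative (\<lambda>V. symm_prod V Y)) (at U)"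
proof -
  have "bounded_linear (\<lambda>V::real^'r^'n. symm_prod V Y)"
    unfolding symm_prod_def
    by (intro bounded_linear_add bounded_bilinear.bounded_linear_left
        bounded_bilinear.bounded_linear_right bounded_bilinear_mult_transpose)
  then show ?thesis by (rule bounded_linear.has_derivative[OF _ has_derivative_ident])
qed

lemma has_derivative_fA:
  assumes "\<forall>i<m. linear (A i)"
  shows "(fA m A Z has_derivative
           (\<lambda>Y. 2 * innerA m A (U ** transpose U - Z ** transpose Z) (symm_prod U Y))) (at U)"
proof -
  have "((\<lambda>U. innerA m A (U ** transpose U - Z ** transpose Z) (U ** transpose U - Z ** transpose Z))
      has_derivative (\<lambda>Y. innerA m A (U ** transpose U - Z ** transpose Z) (symm_prod U Y)
        + innerA m A (symm_prod U Y) (U ** transpose U - Z ** transpose Z))) (at U)"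
    by (rule bounded_bilinear.FDERIV[OF bounded_bilinear_innerA[OF assms]
          has_derivative_gram_minus has_derivative_gram_minus])
  then show ?thesis
    unfolding fA_def sqnormA_eq_innerA
    by (rule has_derivative_eq_rhs) (simp add: fun_eq_iff innerA_commute[of m A "symm_prod U _"])
qed

lemma has_derivative_fA_derivative:
  assumes "\<forall>i<m. linear (A i)"
  shows "((\<lambda>U. 2 * innerA m A (U ** transpose U - Z ** transpose Z) (symm_prod U Y)) has_derivative
           (\<lambda>V. 2 * (innerA m A (symm_prod U V) (symm_prod U Y)
                     + innerA m A (U ** transpose U - Z ** transpose Z) (symm_prod V Y)))) (at U)"
  using has_derivative_mult_right[OF bounded_bilinear.FDERIV[OF bounded_bilinear_innerA[OF assms]
      has_derivative_gram_minus has_derivative_symm_prod], of 2]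
  by (simp add: algebra_simps)

lemma hess_psd_imp_second_derivative_nonneg:
  assumes hess: "hess_psd f X"
    and Df: "\<And>U. (f has_derivative Df U) (at U)"
    and D2: "((\<lambda>U. Df U Y) has_derivative D2) (at X)"
  shows "0 \<le> D2 Y"
proof -
  obtain H where H: "((\<lambda>U. Blinfun (frechet_derivative f (at U))) has_derivative H) (at X)"
    "\<forall>Y. 0 \<le> blinfun_apply (H Y) Y"
    using hess unfolding hess_psd_def by blast
  have Df_eq: "blinfun_apply (Blinfun (frechet_derivative f (at U))) = Df U" for U
    using frechet_derivative_at[OF Df] has_derivative_bounded_linear[OF Df]
    by (simp add: bounded_linear_Blinfun_apply)
  have "((\<lambda>U. Df U Y) has_derivative (\<lambda>V. Df X 0 + blinfun_apply (H V) Y)) (at X)"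
    using bounded_bilinear.FDERIV[OF bounded_bilinear_blinfun_apply H(1) has_derivative_const]
    by (simp add: Df_eq)
  moreover have "Df X 0 = 0"
    using has_derivative_bounded_linear[OF Df] linear_0 bounded_linear.linear by blast
  ultimately have "D2 = (\<lambda>V. blinfun_apply (H V) Y)"
    using has_derivative_unique[OF D2] by simp
  then show ?thesis using H(2) by simp
qed

lemma fA_first_order_condition:
  assumes "\<forall>i<m. linear (A i)" "grad_zero (fA m A Z) X"
  shows "innerA m A (X ** transpose X - Z ** transpose Z) (symm_prod X Y) = 0"
  using has_derivative_unique[OF has_derivative_fA[OF assms(1)] assms(2)[unfolded grad_zero_def]]
  by (metis mult_eq_0_iff zero_neq_numeral)

lemma fA_second_order_condition:
  assumes "\<forall>i<m. linear (A i)" "hess_psd (fA m A Z) X"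
  shows "0 \<le> sqnormA m A (symm_prod X Y)
             + 2 * innerA m A (X ** transpose X - Z ** transpose Z) (Y ** transpose Y)"
proof -
  interpret A: bounded_bilinear "innerA m A" by (rule bounded_bilinear_innerA[OF assms(1)])
  have "0 \<le> 2 * (innerA m A (symm_prod X Y) (symm_prod X Y)
                 + innerA m A (X ** transpose X - Z ** transpose Z) (symm_prod Y Y))"
    by (rule hess_psd_imp_second_derivative_nonneg[OF assms(2) has_derivative_fA[OF assms(1)]
          has_derivative_fA_derivative[OF assms(1)]])
  moreover have "symm_prod Y Y = 2 *\<^sub>R (Y ** transpose Y)"
    by (simp add: symm_prod_def scaleR_2)
  ultimately show ?thesis
    by (simp add: A.scaleR_right sqnormA_eq_innerA)
qed

definition RIP_bounds :: "nat \<Rightarrow> (nat \<Rightarrow> real^'n^'n \<Rightarrow> real) \<Rightarrow> real \<Rightarrow> nat \<Rightarrow> real \<Rightarrow> bool" where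
  "RIP_bounds m A \<delta> p \<nu> \<longleftrightarrow> (\<forall>E::real^'n^'n. rank E \<le> p \<longrightarrow>
     (1 - \<delta>) * (norm E)\<^sup>2 \<le> (1 / \<nu>) * sqnormA m A E \<and>
     (1 / \<nu>) * sqnormA m A E \<le> (1 + \<delta>) * (norm E)\<^sup>2)"

lemma is_RIP_iff: "is_RIP m A \<delta> p \<longleftrightarrow> 0 \<le> \<delta> \<and> \<delta> < 1 \<and> (\<exists>\<nu>>0. RIP_bounds m A \<delta> p \<nu>)"
  by (simp add: is_RIP_def RIP_bounds_def)

lemma sqnormA_upper:
  assumes "RIP_bounds m A \<delta> p \<nu>" "0 < \<nu>" "rank E \<le> p"
  shows "sqnormA m A E \<le> \<nu> * (1 + \<delta>) * (norm E)\<^sup>2"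
  using assms by (simp add: RIP_bounds_def field_simps)

lemma sqnormA_polarization:
  assumes "\<forall>i<m. linear (A i)"
  shows "sqnormA m A (E + F) - sqnormA m A (E - F) = 4 * innerA m A E F"
proof -
  interpret A: bounded_bilinear "innerA m A" by (rule bounded_bilinear_innerA[OF assms])
  show ?thesis
    by (simp add: sqnormA_eq_innerA A.add_left A.add_right A.diff_left A.diff_right
        innerA_commute[of m A F E])
qed

lemma RIP_polarization:
  fixes E F :: "real^'n^'n"
  assumes lin: "\<forall>i<m. linear (A i)" and nu: "0 < \<nu>" and rip: "RIP_bounds m A \<delta> p \<nu>"
    and rk: "\<forall>s t. rank (s *\<^sub>R E + t *\<^sub>R F) \<le> p"
  shows "\<nu> * (E \<bullet> F - \<delta> * (norm E * norm F)) \<le> innerA m A E F"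
proof -
  interpret A: bounded_bilinear "innerA m A" by (rule bounded_bilinear_innerA[OF lin])
  show ?thesis
  proof (cases "E = 0 \<or> F = 0")
    case True
    then show ?thesis by (auto simp: A.zero_left A.zero_right)
  next
    case False
    define a where "a = (1 / norm E) *\<^sub>R E"
    define b where "b = (1 / norm F) *\<^sub>R F"
    define c where "c = a \<bullet> b"
    have "a \<bullet> a = 1" "b \<bullet> b = 1"
      using False by (simp_all add: a_def b_def dot_square_norm power2_eq_square)
    then have "(norm (a + b))\<^sup>2 = 2 + 2 * c" "(norm (a - b))\<^sup>2 = 2 - 2 * c"
      by (simp_all add: power2_norm_eq_inner inner_add_left inner_add_right inner_diff_left
          inner_diff_right c_def inner_commute[of b a])
    moreover have "rank (a + b) \<le> p" "rank (a - b) \<le> p"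
      using rk[rule_format, of "1 / norm E" "1 / norm F"] rk[rule_format, of "1 / norm E" "- 1 / norm F"]
      by (simp_all add: a_def b_def)
    ultimately have "(1 - \<delta>) * (2 + 2 * c) \<le> (1 / \<nu>) * sqnormA m A (a + b)"
      "(1 / \<nu>) * sqnormA m A (a - b) \<le> (1 + \<delta>) * (2 - 2 * c)"
      using rip unfolding RIP_bounds_def by metis+
    then have "4 * (c - \<delta>) \<le> (1 / \<nu>) * (4 * innerA m A a b)"
      unfolding sqnormA_polarization[OF lin, symmetric] by (simp add: algebra_simps)
    then have "\<nu> * (c - \<delta>) \<le> innerA m A a b"
      using nu by (simp add: field_simps)
    moreover have "0 < norm E * norm F" using False by simp
    ultimately have "\<nu> * (c - \<delta>) * (norm E * norm F) \<le> innerA m A a b * (norm E * norm F)"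
      by (intro mult_right_mono) auto
    moreover have "innerA m A a b * (norm E * norm F) = innerA m A E F"
      using False by (simp add: a_def b_def A.scaleR_left A.scaleR_right)
    moreover have "c * (norm E * norm F) = E \<bullet> F"
      using False by (simp add: c_def a_def b_def)
    ultimately show ?thesis by (simp add: algebra_simps)
  qed
qed

lemma innerA_residual_upper:
  fixes X Z Y :: "real^'r^'n" and Ys :: "'c::finite \<Rightarrow> real^'r^'n"
  assumes lin: "\<forall>i<m. linear (A i)" and nu: "0 < \<nu>" and rip: "RIP_bounds m A \<delta> p \<nu>"
    and rk: "\<And>k. rank (symm_prod X (Ys k)) \<le> p"
    and grad: "grad_zero (fA m A Z) X" and hess: "hess_psd (fA m A Z) X"
  shows "innerA m A (X ** transpose X - Z ** transpose Z)
           (symm_prod X Y - (\<Sum>k\<in>UNIV. Ys k ** transpose (Ys k)))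
         \<le> \<nu> * (1 + \<delta>) / 2 * (\<Sum>k\<in>UNIV. (norm (symm_prod X (Ys k)))\<^sup>2)"
proof -
  interpret A: bounded_bilinear "innerA m A" by (rule bounded_bilinear_innerA[OF lin])
  let ?E = "X ** transpose X - Z ** transpose Z"
  have "- innerA m A ?E (Ys k ** transpose (Ys k)) \<le> \<nu> * (1 + \<delta>) / 2 * (norm (symm_prod X (Ys k)))\<^sup>2"
    for k
    using fA_second_order_condition[OF lin hess, of "Ys k"] sqnormA_upper[OF rip nu rk[of k]]
    by simp
  then have "- (\<Sum>k\<in>UNIV. innerA m A ?E (Ys k ** transpose (Ys k)))
      \<le> (\<Sum>k\<in>UNIV. \<nu> * (1 + \<delta>) / 2 * (norm (symm_prod X (Ys k)))\<^sup>2)"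
    unfolding sum_negf[symmetric] by (rule sum_mono)
  then show ?thesis
    by (simp add: A.diff_right A.sum_right fA_first_order_condition[OF lin grad] sum_distrib_left)
qed

lemma critical_point_residual_bound:
  fixes X Z Y :: "real^'r^'n" and Ys :: "'c::finite \<Rightarrow> real^'r^'n"
  assumes lin: "\<forall>i<m. linear (A i)" and nu: "0 < \<nu>" and dl: "0 \<le> \<delta>"
    and rip: "RIP_bounds m A \<delta> (CARD('r) + rank Z) \<nu>"
    and grad: "grad_zero (fA m A Z) X" and hess: "hess_psd (fA m A Z) X"
  defines "E \<equiv> X ** transpose X - Z ** transpose Z"
    and "U \<equiv> symm_prod X Y - (\<Sum>k\<in>UNIV. Ys k ** transpose (Ys k))"
    and "T \<equiv> \<Sum>k\<in>UNIV. (norm (symm_prod X (Ys k)))\<^sup>2"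
  shows "E \<bullet> U - T / 2 \<le> \<delta> * (norm E * norm U + T / 2)"
proof -
  obtain P :: "real^'n^'n" where P: "transpose P = P" "P ** P = P" "P ** X = X" "P ** Z = Z"
      and rkP: "rank P \<le> CARD('r) + rank Z"
    using column_projector_exists[of X Z] by blast
  have rk: "rank (P ** F ** P) \<le> CARD('r) + rank Z" for F
    using rkP rank_mul_le_left[of "P ** F" P] rank_mul_le_left[of P F] by linarith
  define U' where "U' = P ** U ** P"
  have E: "P ** E ** P = E"
    using outer_compress[OF P(1), of X] outer_compress[OF P(1), of Z] P(3,4)
    by (simp add: E_def matrix_mult.diff_left matrix_mult.diff_right)
  have U': "U' = symm_prod X (P ** Y) - (\<Sum>k\<in>UNIV. (P ** Ys k) ** transpose (P ** Ys k))"
    by (simp add: U'_def U_def matrix_mult.diff_left matrix_mult.diff_right matrix_mult.sum_left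
        matrix_mult.sum_right symm_prod_compress[OF P(1,3)] outer_compress[OF P(1)])
  have "innerA m A E U' \<le> \<nu> * (1 + \<delta>) / 2 * (\<Sum>k\<in>UNIV. (norm (symm_prod X (P ** Ys k)))\<^sup>2)"
    unfolding E_def U' using symm_prod_compress[OF P(1,3)] rk
    by (intro innerA_residual_upper[OF lin nu rip _ grad hess]) simp
  also have "\<dots> \<le> \<nu> * (1 + \<delta>) / 2 * T"
    unfolding T_def symm_prod_compress[OF P(1,3)] using nu dl
    by (intro mult_left_mono sum_mono power_mono norm_compress_le[OF P(1,2)]) auto
  finally have upper: "innerA m A E U' \<le> \<nu> * (1 + \<delta>) / 2 * T" .
  have "P ** U' ** P = U'"
    unfolding U'_def by (metis P(2) matrix_mul_assoc)
  then have "rank (s *\<^sub>R E + t *\<^sub>R U') \<le> CARD('r) + rank Z" for s t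
    using rk[of "s *\<^sub>R E + t *\<^sub>R U'"]
    by (simp add: E matrix_mult.add_left matrix_mult.add_right matrix_mult.scaleR_left
        matrix_mult.scaleR_right)
  then have lower: "\<nu> * (E \<bullet> U' - \<delta> * (norm E * norm U')) \<le> innerA m A E U'"
    by (intro RIP_polarization[OF lin nu rip]) blast
  have "E \<bullet> U' = E \<bullet> U"
    using inner_compress[OF P(1), of E U] E by (simp add: U'_def)
  moreover have "\<delta> * (norm E * norm U') \<le> \<delta> * (norm E * norm U)"
    unfolding U'_def using dl norm_compress_le[OF P(1,2)] by (intro mult_left_mono) auto
  ultimately have "\<nu> * (E \<bullet> U - \<delta> * (norm E * norm U)) \<le> \<nu> * (E \<bullet> U' - \<delta> * (norm E * norm U'))"
    using nu by (intro mult_left_mono) auto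
  then have "\<nu> * (E \<bullet> U - \<delta> * (norm E * norm U)) \<le> \<nu> * ((1 + \<delta>) / 2 * T)"
    using lower upper by simp
  then have "E \<bullet> U - \<delta> * (norm E * norm U) \<le> (1 + \<delta>) / 2 * T"
    using nu by (simp only: mult_le_cancel_left_pos)
  then show ?thesis
    by (simp add: algebra_simps)
qed

lemma vecm_diff: "vecm (M - N) = vecm M - vecm N"
  by (simp add: vecm_def vec_eq_iff)

lemma inner_vecm: "vecm M \<bullet> vecm N = M \<bullet> (N::real^'c^'a)"
proof -
  have "vecm M \<bullet> vecm N = (\<Sum>p\<in>UNIV \<times> UNIV. M $ fst p $ snd p * N $ fst p $ snd p)"
    by (simp add: vecm_def inner_vec_def)
  then show ?thesis
    by (simp add: sum.cartesian_product case_prod_beta inner_vec_def)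
qed

lemma norm_vecm: "norm (vecm M) = norm (M::real^'c^'a)"
  by (simp add: norm_eq_sqrt_inner inner_vecm)

lemma Jmat_mult_vector: "Jmat X *v v = vecm (symm_prod X (unvecm v))"
proof -
  have "Vector_Spaces.linear (*s) (*s) (\<lambda>v. vecm (symm_prod X (unvecm v)))"
    unfolding linear_matrix_vector_mul_eq by (rule linearI)
      (simp_all add: vecm_def unvecm_def symm_prod_def vec_eq_iff matrix_matrix_mult_def
        transpose_def sum.distrib sum_distrib_left algebra_simps)
  then show ?thesis
    unfolding Jmat_def symm_prod_def[symmetric] by (rule matrix_works)
qed

lemma wvec_sum_outer:
  fixes V :: "'k \<Rightarrow> real^('n::finite \<times> 'r::finite)"
  shows "wvec (\<Sum>k\<in>UNIV. outer (V k)) = vecm (\<Sum>k\<in>UNIV. unvecm (V k) ** transpose (unvecm (V k)))"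
proof -
  have "(\<Sum>i\<in>UNIV. \<Sum>k\<in>UNIV. V k $ (a, i) * V k $ (b, i))
      = (\<Sum>k\<in>UNIV. \<Sum>i\<in>UNIV. V k $ (a, i) * V k $ (b, i))" for a b
    by (rule sum.swap)
  then show ?thesis
    by (simp add: vec_eq_iff wvec_def vecm_def unvecm_def outer_def sum_component
        matrix_matrix_mult_def transpose_def)
qed

lemma frob_inner_outer: "frob_inner M (outer v) = v \<bullet> (transpose M *v v)"
  by (simp add: frob_inner_def trace_def outer_def matrix_matrix_mult_def transpose_def
      inner_vec_def matrix_vector_mult_def sum_distrib_left mult_ac)

lemma frob_inner_sum_right: "frob_inner M (\<Sum>k\<in>K. F k) = (\<Sum>k\<in>K. frob_inner M (F k))"
  by (induction K rule: infinite_finite_induct)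
    (simp_all add: frob_inner_def matrix_add_ldistrib trace_def sum.distrib)

lemma frob_inner_gram_sum_outer:
  fixes J :: "real^'k^'m"
  shows "frob_inner (transpose J ** J) (\<Sum>k\<in>K. outer (V k)) = (\<Sum>k\<in>K. (norm (J *v V k))\<^sup>2)"
proof -
  have "v \<bullet> ((transpose J ** J) *v v) = (norm (J *v v))\<^sup>2" for v
    by (simp add: power2_norm_eq_inner inner_commute[of v] dot_lmul_matrix
        flip: matrix_vector_mul_assoc)
  then show ?thesis
    by (simp add: frob_inner_sum_right frob_inner_outer matrix_transpose_mul)
qed

lemma feasible_objective_le:
  fixes X Z :: "real^'r^'n"
  assumes ne: "X ** transpose X \<noteq> Z ** transpose Z"
    and lin: "\<forall>i<m. linear (A i)" and nu: "0 < \<nu>" and dl: "0 \<le> \<delta>"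
    and rip: "RIP_bounds m A \<delta> (CARD('r) + rank Z) \<nu>"
    and grad: "grad_zero (fA m A Z) X" and hess: "hess_psd (fA m A Z) X"
    and fe: "feasible X Z t y W"
  shows "objective X Z y W \<le> \<delta> * (1 + t) + t"
proof -
  obtain V :: "'n \<times> 'r \<Rightarrow> real^('n \<times> 'r)" where W: "W = (\<Sum>k\<in>UNIV. outer (V k))"
    using fe psd_eq_sum_outer unfolding feasible_def by blast
  define E where "E = X ** transpose X - Z ** transpose Z"
  define U where "U = symm_prod X (unvecm y) - (\<Sum>k\<in>UNIV. unvecm (V k) ** transpose (unvecm (V k)))"
  define T where "T = (\<Sum>k\<in>UNIV. (norm (symm_prod X (unvecm (V k))))\<^sup>2)"
  have bound: "E \<bullet> U - T / 2 \<le> \<delta> * (norm E * norm U + T / 2)"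
    unfolding E_def U_def T_def by (rule critical_point_residual_bound[OF lin nu dl rip grad hess])
  have e: "err_vec X Z = vecm E" by (simp add: err_vec_def E_def)
  have u: "Jmat X *v y - wvec W = vecm U"
    by (simp add: W Jmat_mult_vector wvec_sum_outer U_def vecm_diff)
  have "frob_inner (transpose (Jmat X) ** Jmat X) W = T"
    by (simp add: W frob_inner_gram_sum_outer T_def Jmat_mult_vector norm_vecm)
  moreover have "vecm U \<noteq> 0" using fe u by (simp add: feasible_def)
  then have "U \<noteq> 0" by (metis norm_vecm norm_eq_zero)
  then have pos: "0 < norm E * norm U" using ne by (simp add: E_def)
  ultimately have "T / (norm E * norm U) = 2 * t"
    using fe by (simp add: feasible_def e u norm_vecm)
  then have T: "T = 2 * t * (norm E * norm U)"
    using pos by (metis divide_eq_eq less_irrefl)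
  have "E \<bullet> U \<le> (\<delta> * (1 + t) + t) * (norm E * norm U)"
    using bound by (simp add: T algebra_simps)
  then show ?thesis
    using pos by (simp add: objective_def e u norm_vecm inner_vecm pos_divide_le_eq)
qed

lemma ex_feasible:
  fixes X Z :: "real^'r^'n"
  shows "\<exists>t y W. 0 \<le> t \<and> feasible X Z t y W"
proof -
  define W :: "real^('n \<times> 'r)^('n \<times> 'r)" where "W = mat 1"
  define t where "t = frob_inner (transpose (Jmat X) ** Jmat X) W
                        / (norm (err_vec X Z) * norm (Jmat X *v 0 - wvec W)) / 2"
  have "psd W" by (simp add: W_def psd_def)
  moreover have "(Jmat X *v 0 - wvec W) $ (a, a) = - real CARD('r)" for a
    by (simp add: wvec_def W_def mat_def)
  then have "Jmat X *v 0 - wvec W \<noteq> 0"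
    by (metis neg_0_equal_iff_equal of_nat_eq_0_iff zero_index UNIV_not_empty
        finite card_0_eq)
  ultimately have "feasible X Z t 0 W"
    by (simp add: feasible_def t_def)
  obtain V :: "'n \<times> 'r \<Rightarrow> real^('n \<times> 'r)" where "W = (\<Sum>k\<in>UNIV. outer (V k))"
    using psd_eq_sum_outer[OF \<open>psd W\<close>] by blast
  then have "0 \<le> t"
    by (simp add: t_def frob_inner_gram_sum_outer sum_nonneg)
  then show ?thesis using \<open>feasible X Z t 0 W\<close> by blast
qed

lemma cos_theta_le:
  fixes X Z :: "real^'r^'n"
  assumes ne: "X ** transpose X \<noteq> Z ** transpose Z" and lin: "\<forall>i<m. linear (A i)"
    and rip: "is_RIP m A \<delta> (CARD('r) + rank Z)"
    and grad: "grad_zero (fA m A Z) X" and hess: "hess_psd (fA m A Z) X"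
    and fe: "\<exists>y W. feasible X Z t y W"
  shows "cos_theta X Z t \<le> \<delta> * (1 + t) + t"
proof -
  obtain \<nu> where "0 \<le> \<delta>" "0 < \<nu>" "RIP_bounds m A \<delta> (CARD('r) + rank Z) \<nu>"
    using rip unfolding is_RIP_iff by blast
  then show ?thesis
    unfolding cos_theta_def using fe feasible_objective_le[OF ne lin _ _ _ grad hess]
    by (intro cSup_least) auto
qed

lemma le_delta_XZI:
  fixes X Z :: "real^'r^'n"
  assumes "\<And>m (A :: nat \<Rightarrow> real^'n^'n \<Rightarrow> real) \<delta>. (\<forall>i<m. linear (A i)) \<Longrightarrow>
             is_RIP m A \<delta> (CARD('r) + rank Z) \<Longrightarrow>
             grad_zero (fA m A Z) X \<Longrightarrow> hess_psd (fA m A Z) X \<Longrightarrow> c \<le> \<delta>"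
  shows "ereal c \<le> delta_XZ X Z"
  unfolding delta_XZ_def using assms by (auto intro!: Inf_greatest)

theorem lemma14:
  fixes X Z :: "real^'r^'n"
  assumes "X ** transpose X \<noteq> Z ** transpose Z"
  shows "ereal (SUP t\<in>{t. 0 \<le> t \<and> (\<exists>y W. feasible X Z t y W)}. (cos_theta X Z t - t) / (1 + t))
           \<le> delta_XZ X Z"
proof (rule le_delta_XZI)
  fix m \<delta> and A :: "nat \<Rightarrow> real^'n^'n \<Rightarrow> real"
  assume certificate: "\<forall>i<m. linear (A i)" "is_RIP m A \<delta> (CARD('r) + rank Z)"
    "grad_zero (fA m A Z) X" "hess_psd (fA m A Z) X"
  show "(SUP t\<in>{t. 0 \<le> t \<and> (\<exists>y W. feasible X Z t y W)}. (cos_theta X Z t - t) / (1 + t)) \<le> \<delta>"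
  proof (rule cSUP_least)
    show "{t. 0 \<le> t \<and> (\<exists>y W. feasible X Z t y W)} \<noteq> {}"
      using ex_feasible by blast
  next
    fix t assume "t \<in> {t. 0 \<le> t \<and> (\<exists>y W. feasible X Z t y W)}"
    then have "0 \<le> t" "cos_theta X Z t \<le> \<delta> * (1 + t) + t"
      using cos_theta_le[OF assms certificate] by auto
    then show "(cos_theta X Z t - t) / (1 + t) \<le> \<delta>"
      by (simp add: divide_le_eq algebra_simps)
  qed
qed

end
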